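(* Let $V$ be a real vector space with an inner product of signature $(p,q)$ where $p\ge q\ge2$. (1) If $p=q$, then there exists an algebraic curvature tensor $R$ on $V$ which has spacelike rank $4$ and timelike rank $4$, and which does not have constant mixed rank. (2) If $p>q$, then there exists an algebraic curvature tensor $R$ on $V$ which has spacelike rank $4$, and which does not have constant timelike rank and does not have mixed rank $4$.
   Context: An inner product of signature $(p,q)$ is a non-degenerate symmetric bilinear form $(\cdot,\cdot)$ whose maximal negative definite subspaces have dimension $p$ and maximal positive definite subspaces dimension $q$. A $2$-plane $\pi$ is spacelike (resp. timelike, mixed) if the induced form on $\pi$ has signature $(0,2)$ (resp. $(2,0)$, $(1,1)$). An algebraic curvature tensor is $R\in\otimes^4V^*$ with $R(x,y,z,w)=R(z,w,x,y)=-R(y,x,z,w)$ and $R(x,y,z,w)+R(y,z,x,w)+R(z,x,y,w)=0$; the operator $R(x,y)$ is defined by $R(x,y,z,w)=(R(x,y)z,w)$. For a non-degenerate $2$-plane $\pi$ with oriented basis $\{e_1,e_2\}$, $R(\pi):=|(e_1,e_1)(e_2,e_2)-(e_1,e_2)^2|^{-1/2}R(e_1,e_2)$. $R$ has spacelike rank $r$ if $\operatorname{rank}R(\pi)=r$ for every oriented spacelike $2$-plane $\pi$; timelike and mixed rank $r$ are defined analogously. Constant timelike (mixed) rank means timelike (mixed) rank $r$ for some $r$. *)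

theory Defs
  imports "HOL-Analysis.Analysis"
begin

text \<open>A finite-dimensional real vector space V is modelled by a type 'a of class
  euclidean_space; its built-in Euclidean inner product plays no role. The
  indefinite inner product is a separate form B.\<close>

definition sym_bilinear_form :: "('a::real_vector \<Rightarrow> 'a \<Rightarrow> real) \<Rightarrow> bool" where
  "sym_bilinear_form B \<longleftrightarrow> bilinear B \<and> (\<forall>x y. B x y = B y x)"

definition neg_def_subspace :: "('a::real_vector \<Rightarrow> 'a \<Rightarrow> real) \<Rightarrow> 'a set \<Rightarrow> bool" where
  "neg_def_subspace B N \<longleftrightarrow> subspace N \<and> (\<forall>x\<in>N. x \<noteq> 0 \<longrightarrow> B x x < 0)"

definition pos_def_subspace :: "('a::real_vector \<Rightarrow> 'a \<Rightarrow> real) \<Rightarrow> 'a set \<Rightarrow> bool" where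
  "pos_def_subspace B N \<longleftrightarrow> subspace N \<and> (\<forall>x\<in>N. x \<noteq> 0 \<longrightarrow> B x x > 0)"

definition signature_on ::
  "'a::euclidean_space set \<Rightarrow> ('a \<Rightarrow> 'a \<Rightarrow> real) \<Rightarrow> nat \<Rightarrow> nat \<Rightarrow> bool" where
  "signature_on W B p q \<longleftrightarrow>
     (\<forall>x\<in>W. (\<forall>y\<in>W. B x y = 0) \<longrightarrow> x = 0) \<and>
     (\<exists>N. N \<subseteq> W \<and> neg_def_subspace B N \<and> dim N = p) \<and>
     (\<forall>N. N \<subseteq> W \<and> neg_def_subspace B N \<longrightarrow> dim N \<le> p) \<and>
     (\<exists>P. P \<subseteq> W \<and> pos_def_subspace B P \<and> dim P = q) \<and>
     (\<forall>P. P \<subseteq> W \<and> pos_def_subspace B P \<longrightarrow> dim P \<le> q)"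

definition inner_product_sig :: "('a::euclidean_space \<Rightarrow> 'a \<Rightarrow> real) \<Rightarrow> nat \<Rightarrow> nat \<Rightarrow> bool" where
  "inner_product_sig B p q \<longleftrightarrow> sym_bilinear_form B \<and> signature_on UNIV B p q"

definition alg_curv_tensor :: "('a::real_vector \<Rightarrow> 'a \<Rightarrow> 'a \<Rightarrow> 'a \<Rightarrow> real) \<Rightarrow> bool" where
  "alg_curv_tensor R \<longleftrightarrow>
     (\<forall>y z w. linear (\<lambda>x. R x y z w)) \<and> (\<forall>x z w. linear (\<lambda>y. R x y z w)) \<and>
     (\<forall>x y w. linear (\<lambda>z. R x y z w)) \<and> (\<forall>x y z. linear (\<lambda>w. R x y z w)) \<and>
     (\<forall>x y z w. R x y z w = R z w x y) \<and>
     (\<forall>x y z w. R x y z w = - R y x z w) \<and>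
     (\<forall>x y z w. R x y z w + R y z x w + R z x y w = 0)"

definition curv_op ::
  "('a \<Rightarrow> 'a \<Rightarrow> real) \<Rightarrow> ('a \<Rightarrow> 'a \<Rightarrow> 'a \<Rightarrow> 'a \<Rightarrow> real) \<Rightarrow> 'a \<Rightarrow> 'a \<Rightarrow> 'a \<Rightarrow> 'a" where
  "curv_op B R x y z = (THE u. \<forall>w. B u w = R x y z w)"

definition plane_op ::
  "('a::real_vector \<Rightarrow> 'a \<Rightarrow> real) \<Rightarrow> ('a \<Rightarrow> 'a \<Rightarrow> 'a \<Rightarrow> 'a \<Rightarrow> real) \<Rightarrow> 'a \<Rightarrow> 'a \<Rightarrow> 'a \<Rightarrow> 'a" where
  "plane_op B R e1 e2 z =
     \<bar>B e1 e1 * B e2 e2 - (B e1 e2)^2\<bar> powr (-1/2) *\<^sub>R curv_op B R e1 e2 z"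

definition op_rank :: "('a::euclidean_space \<Rightarrow> 'a) \<Rightarrow> nat" where
  "op_rank f = dim (range f)"

definition plane_of_type ::
  "('a::euclidean_space \<Rightarrow> 'a \<Rightarrow> real) \<Rightarrow> nat \<Rightarrow> nat \<Rightarrow> 'a \<Rightarrow> 'a \<Rightarrow> bool" where
  "plane_of_type B a b e1 e2 \<longleftrightarrow>
     dim (span {e1, e2}) = 2 \<and> signature_on (span {e1, e2}) B a b"

definition rank_on_planes ::
  "('a::euclidean_space \<Rightarrow> 'a \<Rightarrow> real) \<Rightarrow> ('a \<Rightarrow> 'a \<Rightarrow> 'a \<Rightarrow> 'a \<Rightarrow> real) \<Rightarrow> nat \<Rightarrow> nat \<Rightarrow> nat \<Rightarrow> bool" where
  "rank_on_planes B R a b r \<longleftrightarrow>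
     (\<forall>e1 e2. plane_of_type B a b e1 e2 \<longrightarrow> op_rank (plane_op B R e1 e2) = r)"

definition spacelike_rank where "spacelike_rank B R r \<longleftrightarrow> rank_on_planes B R 0 2 r"
definition timelike_rank where "timelike_rank B R r \<longleftrightarrow> rank_on_planes B R 2 0 r"
definition mixed_rank where "mixed_rank B R r \<longleftrightarrow> rank_on_planes B R 1 1 r"

definition const_timelike_rank where "const_timelike_rank B R \<longleftrightarrow> (\<exists>r. timelike_rank B R r)"
definition const_mixed_rank where "const_mixed_rank B R \<longleftrightarrow> (\<exists>r. mixed_rank B R r)"

end

theory Submission
  imports Defs
begin

text \<open>Choose \<open>B\<close>-orthonormal spacelike vectors \<open>v 0, \<dots>, v (q - 1)\<close> and timelike vectors
  \<open>a 0, \<dots>, a (p - 1)\<close> with \<open>B (a i) (a j) = - \<delta>\<^sub>i\<^sub>j\<close>, all \<open>v i\<close> orthogonal to all \<open>a j\<close>; by maximality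
  of \<open>q\<close> and \<open>p\<close>, \<open>B\<close> is negative semidefinite on the orthogonal complement of the \<open>v i\<close> and
  positive semidefinite on that of the \<open>a j\<close>. The self-adjoint map \<open>f\<close> with \<open>f (v i) = a i\<close> and
  \<open>f (a i) = - v i\<close> for \<open>i < q\<close>, vanishing on everything orthogonal to these vectors, then satisfies
  \<open>B (f w) (f w) \<le> - B w w\<close>. Take \<open>R = R\<^sub>B + R\<^sub>\<psi>\<close> with \<open>\<psi> x y = B (f x) y\<close>, where
  \<open>R\<^sub>\<phi> x y z w = \<phi> x w * \<phi> y z - \<phi> x z * \<phi> y w\<close>. The operator \<open>R(x, y)\<close> has its range in
  \<open>span {x, y, f x, f y}\<close>, with equality when these four vectors are independent. On a spacelike
  plane \<open>f\<close> reverses the sign of \<open>B\<close>, so the plane and its image are complementary and the rank is 4;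
  if \<open>p = q\<close> the roles of the \<open>v i\<close> and \<open>a i\<close> can be exchanged, giving timelike rank 4. The mixed
  plane of \<open>a 0\<close> and \<open>v 0\<close> is \<open>f\<close>-invariant, so the rank there is at most 2, whereas it is 4 on the
  mixed plane of \<open>a 0\<close> and \<open>v 1\<close>. If \<open>p > q\<close>, then \<open>f (a q) = 0\<close> bounds the rank on the timelike
  plane of \<open>a 0\<close> and \<open>a q\<close> by 3, whereas it is 4 on that of \<open>a 0\<close> and \<open>a 1\<close>.\<close>

lemma sym_bilinear_form_bilinear: "sym_bilinear_form C \<Longrightarrow> bilinear C"
  by (simp add: sym_bilinear_form_def)

lemma sym_bilinear_form_commute: "sym_bilinear_form C \<Longrightarrow> C x y = C y x"
  by (simp add: sym_bilinear_form_def)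

lemma sym_bilinear_form_uminus: "sym_bilinear_form C \<Longrightarrow> sym_bilinear_form (- C)"
  unfolding sym_bilinear_form_def bilinear_def
  by (auto intro!: linearI simp: linear_add linear_scale)

lemma bilinear_sum_left: "bilinear C \<Longrightarrow> C (sum f S) y = (\<Sum>i\<in>S. C (f i) y)"
  by (simp add: bilinear_def linear_sum[of "\<lambda>x. C x y"])

lemma bilinear_sum_right: "bilinear C \<Longrightarrow> C x (sum f S) = (\<Sum>i\<in>S. C x (f i))"
  by (simp add: bilinear_def linear_sum[of "C x"])

lemmas bilinear_simps = bilinear_ladd bilinear_radd bilinear_lmul bilinear_rmul
  bilinear_lneg bilinear_rneg bilinear_lzero bilinear_rzero bilinear_lsub bilinear_rsub
  bilinear_sum_left bilinear_sum_right

lemma neg_def_subspace_iff_pos_def: "neg_def_subspace C N \<longleftrightarrow> pos_def_subspace (- C) N"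
  by (simp add: neg_def_subspace_def pos_def_subspace_def)

lemma signature_on_uminus: "signature_on W (- C) p q \<longleftrightarrow> signature_on W C q p"
  unfolding signature_on_def neg_def_subspace_def pos_def_subspace_def by auto

lemma bilinear_orthogonal_span:
  assumes "bilinear C" "\<forall>s\<in>S. C x s = 0" "y \<in> span S"
  shows "C x y = 0"
proof -
  have "subspace {y. C x y = 0}"
    using assms(1) by (simp add: subspace_def bilinear_simps)
  then have "span S \<subseteq> {y. C x y = 0}"
    using assms(2) by (intro span_minimal) auto
  then show ?thesis
    using assms(3) by auto
qed

lemma dim_insert_orthogonal:
  fixes C :: "'a::euclidean_space \<Rightarrow> 'a \<Rightarrow> real"
  assumes "bilinear C" "\<forall>s\<in>S. C x s = 0" "C x x \<noteq> 0"
  shows "dim (insert x S) = Suc (dim S)"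
proof -
  have "x \<notin> span S"
    using bilinear_orthogonal_span[OF assms(1,2)] assms(3) by blast
  then show ?thesis
    by (simp add: dim_insert)
qed

lemma bilinear_sum_orthogonal:
  fixes n :: nat
  assumes "bilinear C" "\<forall>i<n. \<forall>j<n. C (e i) (e' j) = (if i = j then l i else 0)"
  shows "C (\<Sum>i<n. c i *\<^sub>R e i) (\<Sum>j<n. d j *\<^sub>R e' j) = (\<Sum>i<n. c i * d i * l i)"
proof -
  have "C (\<Sum>i<n. c i *\<^sub>R e i) (\<Sum>j<n. d j *\<^sub>R e' j) = (\<Sum>i<n. \<Sum>j<n. c i * d j * C (e i) (e' j))"
    using assms(1) by (simp add: bilinear_simps sum_distrib_left mult.assoc)
  also have "\<dots> = (\<Sum>i<n. c i * d i * l i)"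
  proof (rule sum.cong[OF refl])
    fix i assume "i \<in> {..<n}"
    then have "(\<Sum>j<n. c i * d j * C (e i) (e' j)) = (\<Sum>j<n. if j = i then c i * d i * l i else 0)"
      using assms(2) by (intro sum.cong) auto
    then show "(\<Sum>j<n. c i * d j * C (e i) (e' j)) = c i * d i * l i"
      using \<open>i \<in> {..<n}\<close> by simp
  qed
  finally show ?thesis .
qed

section \<open>Orthonormal families\<close>

definition orthonormal_family :: "('a \<Rightarrow> 'a \<Rightarrow> real) \<Rightarrow> nat \<Rightarrow> (nat \<Rightarrow> 'a) \<Rightarrow> bool" where
  "orthonormal_family C n v \<longleftrightarrow> (\<forall>i<n. \<forall>j<n. C (v i) (v j) = (if i = j then 1 else 0))"

lemma orthonormal_family_mono:
  "orthonormal_family C n v \<Longrightarrow> m \<le> n \<Longrightarrow> orthonormal_family C m v"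
  by (simp add: orthonormal_family_def)

lemma pos_def_subspace_span_insert:
  assumes C: "sym_bilinear_form C" and S: "pos_def_subspace C (span S)"
    and orth: "\<forall>s\<in>S. C u s = 0" and u: "C u u > 0"
  shows "pos_def_subspace C (span (insert u S))"
proof -
  have bl: "bilinear C"
    using C by (rule sym_bilinear_form_bilinear)
  have "C x x > 0" if x: "x \<in> span (insert u S)" "x \<noteq> 0" for x
  proof -
    obtain k where s_span: "x - k *\<^sub>R u \<in> span S"
      using x(1) by (auto simp: span_breakdown_eq)
    define s where "s = x - k *\<^sub>R u"
    have "C u s = 0"
      using bilinear_orthogonal_span[OF bl orth] s_span by (simp add: s_def)
    then have "C x x = C s s + k\<^sup>2 * C u u"
      using sym_bilinear_form_commute[OF C, of s u]
      by (simp add: s_def bl bilinear_simps algebra_simps power2_eq_square)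
    moreover have "s \<noteq> 0 \<Longrightarrow> C s s > 0"
      using S s_span by (simp add: pos_def_subspace_def s_def)
    moreover have "k \<noteq> 0 \<Longrightarrow> k\<^sup>2 * C u u > 0"
      using u by simp
    moreover have "s = 0 \<Longrightarrow> k \<noteq> 0"
      using x(2) by (auto simp: s_def)
    ultimately show ?thesis
      by (cases "s = 0"; cases "k = 0") (auto simp: bl bilinear_simps add_pos_nonneg add_nonneg_pos)
  qed
  then show ?thesis
    by (simp add: pos_def_subspace_def)
qed

lemma orthonormal_family_span_pos_def:
  fixes C :: "'a::euclidean_space \<Rightarrow> 'a \<Rightarrow> real"
  assumes C: "sym_bilinear_form C"
  shows "orthonormal_family C n v \<Longrightarrow>
    pos_def_subspace C (span (v ` {..<n})) \<and> dim (v ` {..<n}) = n"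
proof (induction n)
  case 0
  then show ?case
    by (simp add: pos_def_subspace_def)
next
  case (Suc n)
  have IH: "pos_def_subspace C (span (v ` {..<n}))" "dim (v ` {..<n}) = n"
    using Suc.IH orthonormal_family_mono[OF Suc.prems, of n] by simp_all
  have orth: "\<forall>s\<in>v ` {..<n}. C (v n) s = 0" and unit: "C (v n) (v n) = 1"
    using Suc.prems by (auto simp: orthonormal_family_def)
  have "v ` {..<Suc n} = insert (v n) (v ` {..<n})"
    by (auto simp: lessThan_Suc)
  then show ?case
    using pos_def_subspace_span_insert[OF C IH(1) orth] IH(2) unit
      dim_insert_orthogonal[OF sym_bilinear_form_bilinear[OF C] orth]
    by simp
qed

lemma nonpos_orthogonal_to_maximal_family:
  fixes C :: "'a::euclidean_space \<Rightarrow> 'a \<Rightarrow> real"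
  assumes C: "sym_bilinear_form C" and v: "orthonormal_family C n v"
    and max: "\<forall>P. pos_def_subspace C P \<longrightarrow> dim P \<le> n"
    and orth: "\<forall>i<n. C u (v i) = 0"
  shows "C u u \<le> 0"
proof (rule ccontr)
  assume "\<not> C u u \<le> 0"
  have orth': "\<forall>s\<in>v ` {..<n}. C u s = 0"
    using orth by auto
  have "pos_def_subspace C (span (insert u (v ` {..<n})))"
    using pos_def_subspace_span_insert[OF C _ orth'] orthonormal_family_span_pos_def[OF C v]
      \<open>\<not> C u u \<le> 0\<close> by simp
  moreover have "dim (span (insert u (v ` {..<n}))) = Suc n"
    using dim_insert_orthogonal[OF sym_bilinear_form_bilinear[OF C] orth']
      orthonormal_family_span_pos_def[OF C v] \<open>\<not> C u u \<le> 0\<close> by simp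
  ultimately show False
    using max by fastforce
qed

lemma pos_def_subspace_orthonormal_basis:
  fixes C :: "'a::euclidean_space \<Rightarrow> 'a \<Rightarrow> real"
  assumes C: "sym_bilinear_form C"
  shows "pos_def_subspace C S \<Longrightarrow> dim S = n \<Longrightarrow>
    \<exists>v. v ` {..<n} \<subseteq> S \<and> orthonormal_family C n v"
proof (induction n arbitrary: S)
  case 0
  then show ?case
    by (simp add: orthonormal_family_def)
next
  case (Suc n)
  have bl: "bilinear C"
    using C by (rule sym_bilinear_form_bilinear)
  have S: "subspace S"
    using Suc.prems(1) by (simp add: pos_def_subspace_def)
  obtain x where x: "x \<in> S" "x \<noteq> 0"
    using Suc.prems(2) dim_eq_0[of S] by auto
  have "C x x > 0"
    using Suc.prems(1) x by (simp add: pos_def_subspace_def)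
  define e where "e = (1 / sqrt (C x x)) *\<^sub>R x"
  have e: "e \<in> S" "C e e = 1"
    using x S \<open>C x x > 0\<close> by (simp_all add: e_def subspace_scale bl bilinear_simps
        real_sqrt_mult[symmetric])
  define S' where "S' = {y \<in> S. C e y = 0}"
  have S': "subspace S'"
    using S by (auto simp: S'_def subspace_def bl bilinear_simps)
  have "pos_def_subspace C S'"
    using Suc.prems(1) S' by (auto simp: pos_def_subspace_def S'_def)
  have "span (insert e S') = S"
  proof
    show "span (insert e S') \<subseteq> S"
      using S e by (intro span_minimal) (auto simp: S'_def)
    show "S \<subseteq> span (insert e S')"
    proof
      fix y assume "y \<in> S"
      then have "y - C e y *\<^sub>R e \<in> S'"
        using S e by (simp add: S'_def subspace_diff subspace_scale bl bilinear_simps)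
      then show "y \<in> span (insert e S')"
        by (auto simp: span_breakdown_eq intro: span_base)
    qed
  qed
  moreover have "e \<notin> span S'"
    using S' e by (simp add: span_eq_iff[THEN iffD2, OF S']) (simp add: S'_def)
  ultimately have "dim S' = n"
    using Suc.prems(2) dim_span[of "insert e S'"] by (simp add: dim_insert)
  then obtain v' where v': "v' ` {..<n} \<subseteq> S'" "orthonormal_family C n v'"
    using Suc.IH[OF \<open>pos_def_subspace C S'\<close>] by blast
  have "C e (v' i) = 0" "C (v' i) e = 0" if "i < n" for i
    using v'(1) that sym_bilinear_form_commute[OF C, of e] by (auto simp: S'_def)
  then have "orthonormal_family C (Suc n) (v'(n := e))"
    using v'(2) e(2) by (auto simp: orthonormal_family_def less_Suc_eq)
  moreover have "(v'(n := e)) ` {..<Suc n} \<subseteq> S"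
    using v'(1) e(1) by (auto simp: S'_def lessThan_Suc)
  ultimately show ?case
    by blast
qed

lemma span_pairE:
  assumes "x \<in> span {a, b}"
  obtains s t where "x = s *\<^sub>R a + t *\<^sub>R b"
proof -
  obtain s where "x - s *\<^sub>R a \<in> span {b}"
    using assms by (auto simp: span_breakdown_eq)
  then obtain t where "x - s *\<^sub>R a = t *\<^sub>R b"
    by (auto simp: span_singleton)
  then show ?thesis
    using that[of s t] by (simp add: algebra_simps)
qed

lemma pos_def_subspace_span_singleton:
  assumes "sym_bilinear_form C" "C e e > 0"
  shows "pos_def_subspace C (span {e})"
  using pos_def_subspace_span_insert[OF assms(1), of "{}" e] assms(2)
  by (simp add: pos_def_subspace_def)

lemma signature_on_pos_def_subspace:
  fixes C :: "'a::euclidean_space \<Rightarrow> 'a \<Rightarrow> real"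
  assumes W: "subspace W" and pos: "pos_def_subspace C W"
  shows "signature_on W C 0 (dim W)"
  unfolding signature_on_def
proof (intro conjI allI impI ballI)
  have C_pos: "C x x > 0" if "x \<in> W" "x \<noteq> 0" for x
    using pos that by (simp add: pos_def_subspace_def)
  show "x = 0" if "x \<in> W" "\<forall>y\<in>W. C x y = 0" for x
    using C_pos[of x] that by force
  show "\<exists>N\<subseteq>W. neg_def_subspace C N \<and> dim N = 0"
    using subspace_0[OF W] by (intro exI[of _ "{0}"]) (auto simp: neg_def_subspace_def subspace_0)
  show "dim N \<le> 0" if "N \<subseteq> W \<and> neg_def_subspace C N" for N
  proof -
    have "N \<subseteq> {0}"
      using that C_pos by (force simp: neg_def_subspace_def)
    then show ?thesis
      using dim_subset[of N "{0}"] by simp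
  qed
  show "\<exists>P\<subseteq>W. pos_def_subspace C P \<and> dim P = dim W"
    using pos by blast
  show "dim P \<le> dim W" if "P \<subseteq> W \<and> pos_def_subspace C P" for P
    using that by (simp add: dim_subset)
qed

lemma pos_def_subspace_of_signature_on:
  fixes C :: "'a::euclidean_space \<Rightarrow> 'a \<Rightarrow> real"
  assumes "subspace W" "signature_on W C p (dim W)"
  shows "pos_def_subspace C W"
proof -
  obtain P where P: "P \<subseteq> W" "pos_def_subspace C P" "dim P = dim W"
    using assms(2) unfolding signature_on_def by blast
  then have "P = W"
    using assms(1) subspace_dim_equal[of P W] by (simp add: pos_def_subspace_def)
  then show ?thesis
    using P(2) by simp
qed

lemma plane_of_type_timelike_iff: "plane_of_type C 2 0 e1 e2 \<longleftrightarrow> plane_of_type (- C) 0 2 e1 e2"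
  by (simp add: plane_of_type_def signature_on_uminus)

lemma plane_of_type_spacelike_pos_def:
  "plane_of_type C 0 2 e1 e2 \<Longrightarrow> pos_def_subspace C (span {e1, e2})"
  unfolding plane_of_type_def using pos_def_subspace_of_signature_on[of "span {e1, e2}" C 0]
  by simp

lemma orthogonal_pair_dim:
  fixes C :: "'a::euclidean_space \<Rightarrow> 'a \<Rightarrow> real"
  assumes "bilinear C" "C e1 e2 = 0" "C e1 e1 \<noteq> 0" "C e2 e2 \<noteq> 0"
  shows "dim {e1, e2} = 2"
  using dim_insert_orthogonal[OF assms(1), of "{}" e2] dim_insert_orthogonal[OF assms(1), of "{e2}" e1]
    assms by simp

lemma orthogonal_pair_spacelike:
  fixes C :: "'a::euclidean_space \<Rightarrow> 'a \<Rightarrow> real"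
  assumes C: "sym_bilinear_form C" and "C e1 e2 = 0" "C e1 e1 > 0" "C e2 e2 > 0"
  shows "plane_of_type C 0 2 e1 e2"
proof -
  have "pos_def_subspace C (span {e1, e2})"
    using pos_def_subspace_span_insert[OF C pos_def_subspace_span_singleton[OF C]] assms by simp
  moreover have "dim {e1, e2} = 2"
    using orthogonal_pair_dim[OF sym_bilinear_form_bilinear[OF C]] assms by simp
  ultimately show ?thesis
    using signature_on_pos_def_subspace[of "span {e1, e2}" C] by (simp add: plane_of_type_def)
qed

lemma orthogonal_pair_mixed:
  fixes C :: "'a::euclidean_space \<Rightarrow> 'a \<Rightarrow> real"
  assumes C: "sym_bilinear_form C" and orth: "C e1 e2 = 0" and neg: "C e1 e1 < 0" and pos: "C e2 e2 > 0"
  shows "plane_of_type C 1 1 e1 e2"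
proof -
  have bl: "bilinear C"
    using C by (rule sym_bilinear_form_bilinear)
  have orth': "C e2 e1 = 0"
    using orth sym_bilinear_form_commute[OF C] by metis
  let ?W = "span {e1, e2}"
  have dim2: "dim ?W = 2"
    using orthogonal_pair_dim[OF bl orth] neg pos by simp
  have dim_lt: "dim N < 2" if "subspace N" "N \<subseteq> ?W" "e \<in> ?W" "e \<notin> N" for N e
    using dim_psubset[of N ?W] that dim2 span_eq_iff[of N] by (metis dim_span psubsetI span_span)
  have "signature_on ?W C 1 1"
    unfolding signature_on_def
  proof (intro conjI allI impI ballI)
    show "x = 0" if x_span: "x \<in> ?W" and x_orth: "\<forall>y\<in>?W. C x y = 0" for x
    proof -
      obtain s t where x: "x = s *\<^sub>R e1 + t *\<^sub>R e2"
        using x_span by (rule span_pairE)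
      have "C x e1 = 0" "C x e2 = 0"
        using x_orth by (simp_all add: span_base)
      then have "s * C e1 e1 = 0" "t * C e2 e2 = 0"
        using orth orth' by (simp_all add: x bl bilinear_simps)
      then show ?thesis
        using neg pos x by simp
    qed
    show "\<exists>N\<subseteq>?W. neg_def_subspace C N \<and> dim N = 1"
      using pos_def_subspace_span_singleton[OF sym_bilinear_form_uminus[OF C], of e1] neg
      by (intro exI[of _ "span {e1}"]) (auto simp: neg_def_subspace_iff_pos_def span_mono bl bilinear_simps)
    show "\<exists>P\<subseteq>?W. pos_def_subspace C P \<and> dim P = 1"
      using pos_def_subspace_span_singleton[OF C, of e2] pos
      by (intro exI[of _ "span {e2}"]) (auto simp: span_mono bl bilinear_simps)
    show "dim N \<le> 1" if "N \<subseteq> ?W \<and> neg_def_subspace C N" for N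
    proof -
      have "e2 \<notin> N"
        using that pos by (auto simp: neg_def_subspace_def bl bilinear_simps)
      then show ?thesis
        using dim_lt[of N e2] that by (simp add: neg_def_subspace_def span_base)
    qed
    show "dim P \<le> 1" if "P \<subseteq> ?W \<and> pos_def_subspace C P" for P
    proof -
      have "e1 \<notin> P"
        using that neg by (auto simp: pos_def_subspace_def bl bilinear_simps)
      then show ?thesis
        using dim_lt[of P e1] that by (simp add: pos_def_subspace_def span_base)
    qed
  qed
  then show ?thesis
    using dim2 by (simp add: plane_of_type_def)
qed

section \<open>Adapted frames and the swap operator\<close>

definition orth_compl_proj :: "('a::real_vector \<Rightarrow> 'a \<Rightarrow> real) \<Rightarrow> nat \<Rightarrow> (nat \<Rightarrow> 'a) \<Rightarrow> 'a \<Rightarrow> 'a" where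
  "orth_compl_proj C n v x = x - (\<Sum>i<n. C x (v i) *\<^sub>R v i)"

lemma linear_orth_compl_proj: "bilinear C \<Longrightarrow> linear (orth_compl_proj C n v)"
  by (rule linearI) (simp_all add: orth_compl_proj_def bilinear_simps scaleR_add_left
      sum.distrib scaleR_sum_right algebra_simps)

lemma orth_compl_proj_orthogonal:
  assumes C: "sym_bilinear_form C" and v: "orthonormal_family C n v" and "j < n"
  shows "C (orth_compl_proj C n v x) (v j) = 0"
proof -
  have bl: "bilinear C"
    using C by (rule sym_bilinear_form_bilinear)
  have "C (\<Sum>i<n. C x (v i) *\<^sub>R v i) (v j) = (\<Sum>i<n. C x (v i) * C (v i) (v j))"
    by (simp add: bl bilinear_simps)
  also have "\<dots> = (\<Sum>i<n. if i = j then C x (v j) else 0)"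
    using v \<open>j < n\<close> by (intro sum.cong) (auto simp: orthonormal_family_def)
  finally show ?thesis
    using \<open>j < n\<close> by (simp add: orth_compl_proj_def bl bilinear_simps)
qed

lemma orth_compl_proj_square:
  assumes C: "sym_bilinear_form C" and v: "orthonormal_family C n v"
  shows "C (orth_compl_proj C n v x) (orth_compl_proj C n v x) = C x x - (\<Sum>i<n. (C x (v i))\<^sup>2)"
proof -
  have bl: "bilinear C"
    using C by (rule sym_bilinear_form_bilinear)
  define y where "y = (\<Sum>i<n. C x (v i) *\<^sub>R v i)"
  have "C y y = (\<Sum>i<n. (C x (v i))\<^sup>2)"
    using bilinear_sum_orthogonal[OF bl, of n v v "\<lambda>_. 1"] v
    by (simp add: y_def orthonormal_family_def power2_eq_square)
  moreover have "C x y = (\<Sum>i<n. (C x (v i))\<^sup>2)"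
    by (simp add: y_def bl bilinear_simps power2_eq_square)
  moreover have "C y x = C x y"
    using sym_bilinear_form_commute[OF C] .
  ultimately show ?thesis
    by (simp add: orth_compl_proj_def y_def[symmetric] bl bilinear_simps)
qed

lemma neg_def_subspace_orth_compl_proj:
  fixes C :: "'a::euclidean_space \<Rightarrow> 'a \<Rightarrow> real"
  assumes C: "sym_bilinear_form C" and v: "orthonormal_family C n v" and N: "neg_def_subspace C N"
  shows "neg_def_subspace C (orth_compl_proj C n v ` N)" "dim (orth_compl_proj C n v ` N) = dim N"
proof -
  let ?P = "orth_compl_proj C n v"
  have lin: "linear ?P"
    using C by (simp add: linear_orth_compl_proj sym_bilinear_form_bilinear)
  have subN: "subspace N"
    using N by (simp add: neg_def_subspace_def)
  have neg: "C (?P x) (?P x) < 0" if "x \<in> N" "x \<noteq> 0" for x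
  proof -
    have "C x x < 0"
      using N that by (simp add: neg_def_subspace_def)
    moreover have "(\<Sum>i<n. (C x (v i))\<^sup>2) \<ge> 0"
      by (simp add: sum_nonneg)
    ultimately show ?thesis
      using orth_compl_proj_square[OF C v, of x] by linarith
  qed
  show "neg_def_subspace C (?P ` N)"
    using neg linear_subspace_image[OF lin subN] linear_0[OF lin]
    by (auto simp: neg_def_subspace_def)
  have "inj_on ?P (span N)"
  proof (rule inj_onI)
    fix x y assume "x \<in> span N" "y \<in> span N" "?P x = ?P y"
    then have "x - y \<in> N" "?P (x - y) = 0"
      using subN span_eq_iff[THEN iffD2, OF subN] by (simp_all add: subspace_diff linear_diff[OF lin])
    then show "x = y"
      using neg[of "x - y"] C by (force simp: sym_bilinear_form_bilinear bilinear_simps)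
  qed
  then show "dim (?P ` N) = dim N"
    using dim_image_eq[OF lin] by blast
qed

lemma inner_product_sig_frame:
  fixes B :: "'a::euclidean_space \<Rightarrow> 'a \<Rightarrow> real"
  assumes sig: "inner_product_sig B p q"
  obtains v a where "orthonormal_family B q v" "orthonormal_family (- B) p a"
    "\<forall>i<q. \<forall>j<p. B (v i) (a j) = 0"
    "\<forall>u. (\<forall>i<q. B u (v i) = 0) \<longrightarrow> B u u \<le> 0"
    "\<forall>u. (\<forall>i<p. B u (a i) = 0) \<longrightarrow> 0 \<le> B u u"
proof -
  have B: "sym_bilinear_form B" and nB: "sym_bilinear_form (- B)"
    using sig by (simp_all add: inner_product_sig_def sym_bilinear_form_uminus)
  have sig_UNIV: "signature_on UNIV B p q"
    using sig by (simp add: inner_product_sig_def)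
  obtain P where "pos_def_subspace B P" "dim P = q"
    using sig_UNIV unfolding signature_on_def by blast
  then obtain v where v: "orthonormal_family B q v"
    using pos_def_subspace_orthonormal_basis[OF B] by blast
  have max_pos: "\<forall>P. pos_def_subspace B P \<longrightarrow> dim P \<le> q"
    using sig_UNIV unfolding signature_on_def by blast
  have max_neg: "\<forall>N. pos_def_subspace (- B) N \<longrightarrow> dim N \<le> p"
    using sig_UNIV unfolding signature_on_def neg_def_subspace_iff_pos_def by blast
  obtain N where N: "neg_def_subspace B N" "dim N = p"
    using sig_UNIV unfolding signature_on_def by blast
  let ?N' = "orth_compl_proj B q v ` N"
  obtain a where a: "a ` {..<p} \<subseteq> ?N'" "orthonormal_family (- B) p a"
    using neg_def_subspace_orth_compl_proj[OF B v N(1)] N(2)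
      pos_def_subspace_orthonormal_basis[OF nB, of ?N' p]
    by (auto simp: neg_def_subspace_iff_pos_def)
  have "\<forall>i<q. \<forall>j<p. B (v i) (a j) = 0"
  proof (intro allI impI)
    fix i j assume "i < q" "j < p"
    then obtain x where "a j = orth_compl_proj B q v x"
      using a(1) by auto
    then show "B (v i) (a j) = 0"
      using orth_compl_proj_orthogonal[OF B v \<open>i < q\<close>] sym_bilinear_form_commute[OF B] by metis
  qed
  moreover have "\<forall>u. (\<forall>i<q. B u (v i) = 0) \<longrightarrow> B u u \<le> 0"
    using nonpos_orthogonal_to_maximal_family[OF B v max_pos] by blast
  moreover have "\<forall>u. (\<forall>i<p. B u (a i) = 0) \<longrightarrow> 0 \<le> B u u"
    using nonpos_orthogonal_to_maximal_family[OF nB a(2) max_neg] by simp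
  ultimately show ?thesis
    using that v a(2) by blast
qed

definition split_frame :: "('a \<Rightarrow> 'a \<Rightarrow> real) \<Rightarrow> nat \<Rightarrow> (nat \<Rightarrow> 'a) \<Rightarrow> (nat \<Rightarrow> 'a) \<Rightarrow> bool" where
  "split_frame C n v a \<longleftrightarrow> orthonormal_family C n v \<and> orthonormal_family (- C) n a \<and>
     (\<forall>i<n. \<forall>j<n. C (v i) (a j) = 0)"

lemma split_frame_uminus:
  "sym_bilinear_form C \<Longrightarrow> split_frame C n v a \<Longrightarrow> split_frame (- C) n a v"
  by (simp add: split_frame_def orthonormal_family_def sym_bilinear_form_commute[of C])

text \<open>The cross terms are written with a vacuous \<open>if\<close> so that they match the hypothesis of
  \<open>bilinear_sum_orthogonal\<close> with \<open>l = (\<lambda>_. 0)\<close>.\<close>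

lemma split_frameD:
  assumes "sym_bilinear_form C" "split_frame C n v a"
  shows "\<forall>i<n. \<forall>j<n. C (v i) (v j) = (if i = j then 1 else 0)"
    and "\<forall>i<n. \<forall>j<n. C (a i) (a j) = (if i = j then -1 else 0)"
    and "\<forall>i<n. \<forall>j<n. C (v i) (a j) = (if i = j then 0 else 0)"
    and "\<forall>i<n. \<forall>j<n. C (a i) (v j) = (if i = j then 0 else 0)"
  using assms sym_bilinear_form_commute[OF assms(1)]
  by (auto simp: split_frame_def orthonormal_family_def minus_equation_iff split: if_splits)

definition swap_op :: "('a::real_vector \<Rightarrow> 'a \<Rightarrow> real) \<Rightarrow> (nat \<Rightarrow> 'a) \<Rightarrow> (nat \<Rightarrow> 'a) \<Rightarrow> nat \<Rightarrow> 'a \<Rightarrow> 'a"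
  where "swap_op C v a n w = (\<Sum>i<n. C w (v i) *\<^sub>R a i) + (\<Sum>i<n. C w (a i) *\<^sub>R v i)"

lemma linear_swap_op: "bilinear C \<Longrightarrow> linear (swap_op C v a n)"
  by (rule linearI) (simp_all add: swap_op_def bilinear_simps scaleR_add_left sum.distrib
      scaleR_sum_right algebra_simps)

lemma swap_op_self_adjoint:
  assumes C: "sym_bilinear_form C"
  shows "C (swap_op C v a n x) y = C x (swap_op C v a n y)"
proof -
  have bl: "bilinear C"
    using C by (rule sym_bilinear_form_bilinear)
  have "C (swap_op C v a n x) y = (\<Sum>i<n. C x (v i) * C (a i) y) + (\<Sum>i<n. C x (a i) * C (v i) y)"
    by (simp add: swap_op_def bl bilinear_simps)
  also have "\<dots> = (\<Sum>i<n. C y (a i) * C x (v i)) + (\<Sum>i<n. C y (v i) * C x (a i))"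
    using sym_bilinear_form_commute[OF C] by (simp add: mult.commute)
  also have "\<dots> = C x (swap_op C v a n y)"
    by (simp add: swap_op_def bl bilinear_simps add.commute)
  finally show ?thesis .
qed

lemma swap_op_uminus: "swap_op (- C) a v n w = - swap_op C v a n w"
  by (simp add: swap_op_def sum_negf add.commute)

lemma swap_op_first:
  assumes "split_frame C n v a" "j < n"
  shows "swap_op C v a n (v j) = a j"
proof -
  have "(\<Sum>i<n. C (v j) (v i) *\<^sub>R a i) = (\<Sum>i<n. if i = j then a i else 0)"
    using assms by (intro sum.cong) (auto simp: split_frame_def orthonormal_family_def)
  moreover have "(\<Sum>i<n. C (v j) (a i) *\<^sub>R v i) = 0"
    using assms by (intro sum.neutral) (simp add: split_frame_def)
  ultimately show ?thesis
    using assms(2) by (simp add: swap_op_def)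
qed

lemma swap_op_second:
  assumes "sym_bilinear_form C" "split_frame C n v a" "j < n"
  shows "swap_op C v a n (a j) = - v j"
  using swap_op_first[OF split_frame_uminus[OF assms(1,2)] assms(3)] swap_op_uminus[of C a v n]
  by (metis minus_equation_iff)

lemma swap_op_orthogonal:
  "\<forall>i<n. C w (v i) = 0 \<Longrightarrow> \<forall>i<n. C w (a i) = 0 \<Longrightarrow> swap_op C v a n w = 0"
  by (simp add: swap_op_def)

lemma swap_op_square:
  assumes C: "sym_bilinear_form C" and frame: "split_frame C n v a"
  shows "C (swap_op C v a n w) (swap_op C v a n w) =
    (\<Sum>i<n. (C w (a i))\<^sup>2) - (\<Sum>i<n. (C w (v i))\<^sup>2)"
proof -
  have bl: "bilinear C"
    using C by (rule sym_bilinear_form_bilinear)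
  note vv = split_frameD(1)[OF C frame] and aa = split_frameD(2)[OF C frame]
    and va = split_frameD(3)[OF C frame] and av = split_frameD(4)[OF C frame]
  show ?thesis
    using bilinear_sum_orthogonal[OF bl aa] bilinear_sum_orthogonal[OF bl vv]
      bilinear_sum_orthogonal[OF bl va] bilinear_sum_orthogonal[OF bl av]
    by (simp add: swap_op_def bl bilinear_ladd bilinear_radd power2_eq_square sum_negf)
qed

text \<open>The vector \<open>u = w - P + A\<close> in the proof is orthogonal to all \<open>v i\<close>, so \<open>C u u \<le> 0\<close>; and
  \<open>C u u = C w w + C (swap_op C v a n w) (swap_op C v a n w)\<close>.\<close>

lemma swap_op_square_le:
  assumes C: "sym_bilinear_form C" and frame: "split_frame C n v a"
    and max: "\<forall>u. (\<forall>i<n. C u (v i) = 0) \<longrightarrow> C u u \<le> 0"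
  shows "C (swap_op C v a n w) (swap_op C v a n w) \<le> - C w w"
proof -
  have bl: "bilinear C"
    using C by (rule sym_bilinear_form_bilinear)
  define P where "P = (\<Sum>i<n. C w (v i) *\<^sub>R v i)"
  define A where "A = (\<Sum>i<n. C w (a i) *\<^sub>R a i)"
  define u where "u = w - P + A"
  note vv = split_frameD(1)[OF C frame] and aa = split_frameD(2)[OF C frame]
    and va = split_frameD(3)[OF C frame] and av = split_frameD(4)[OF C frame]
  have "C u (v j) = 0" if "j < n" for j
  proof -
    have "C (w - P) (v j) = 0"
      using orth_compl_proj_orthogonal[OF C _ that] frame
      by (simp add: split_frame_def orth_compl_proj_def P_def)
    moreover have "C A (v j) = 0"
      using av that by (auto simp: A_def bl bilinear_simps intro: sum.neutral)
    ultimately show ?thesis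
      by (simp add: u_def bl bilinear_simps)
  qed
  then have "C u u \<le> 0"
    using max by blast
  moreover have "C u u = C w w - (\<Sum>i<n. (C w (v i))\<^sup>2) + (\<Sum>i<n. (C w (a i))\<^sup>2)"
  proof -
    have "C P P = (\<Sum>i<n. (C w (v i))\<^sup>2)" "C A A = - (\<Sum>i<n. (C w (a i))\<^sup>2)" "C P A = 0"
      using bilinear_sum_orthogonal[OF bl vv] bilinear_sum_orthogonal[OF bl aa]
        bilinear_sum_orthogonal[OF bl va]
      by (simp_all add: P_def A_def power2_eq_square sum_negf)
    moreover have "C w P = (\<Sum>i<n. (C w (v i))\<^sup>2)" "C w A = (\<Sum>i<n. (C w (a i))\<^sup>2)"
      by (simp_all add: P_def A_def bl bilinear_simps power2_eq_square)
    moreover have "C u u = C w w + C P P + C A A - C w P - C P w + C w A + C A w - C P A - C A P"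
      by (simp add: u_def bl bilinear_ladd bilinear_radd bilinear_lsub bilinear_rsub)
    ultimately show ?thesis
      using sym_bilinear_form_commute[OF C, of P w] sym_bilinear_form_commute[OF C, of A w]
        sym_bilinear_form_commute[OF C, of A P]
      by linarith
  qed
  ultimately show ?thesis
    using swap_op_square[OF C frame, of w] by linarith
qed

section \<open>Curvature tensors built from symmetric forms\<close>

definition curv_of_form :: "('a \<Rightarrow> 'a \<Rightarrow> real) \<Rightarrow> 'a \<Rightarrow> 'a \<Rightarrow> 'a \<Rightarrow> 'a \<Rightarrow> real" where
  "curv_of_form \<phi> x y z w = \<phi> x w * \<phi> y z - \<phi> x z * \<phi> y w"

lemma alg_curv_tensor_curv_of_form:
  assumes "sym_bilinear_form \<phi>"
  shows "alg_curv_tensor (curv_of_form \<phi>)"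
  unfolding alg_curv_tensor_def
proof (intro conjI allI)
  have bl: "bilinear \<phi>"
    using assms by (rule sym_bilinear_form_bilinear)
  note sym = sym_bilinear_form_commute[OF assms]
  fix x y z w
  show "linear (\<lambda>x. curv_of_form \<phi> x y z w)" "linear (\<lambda>y. curv_of_form \<phi> x y z w)"
    "linear (\<lambda>z. curv_of_form \<phi> x y z w)" "linear (\<lambda>w. curv_of_form \<phi> x y z w)"
    by (rule linearI; simp add: curv_of_form_def bl bilinear_simps algebra_simps)+
  show "curv_of_form \<phi> x y z w = curv_of_form \<phi> z w x y"
    unfolding curv_of_form_def sym[of z y] sym[of w x] sym[of z x] sym[of w y] by simp
  show "curv_of_form \<phi> x y z w = - curv_of_form \<phi> y x z w"
    unfolding curv_of_form_def by simp
  show "curv_of_form \<phi> x y z w + curv_of_form \<phi> y z x w + curv_of_form \<phi> z x y w = 0"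
    unfolding curv_of_form_def sym[of z x] sym[of y x] sym[of z y] by simp
qed

lemma alg_curv_tensor_add:
  assumes "alg_curv_tensor R" "alg_curv_tensor S"
  shows "alg_curv_tensor (\<lambda>x y z w. R x y z w + S x y z w)"
  unfolding alg_curv_tensor_def
proof (intro conjI allI)
  note R = assms(1)[unfolded alg_curv_tensor_def] and S = assms(2)[unfolded alg_curv_tensor_def]
  fix x y z w
  show "linear (\<lambda>x. R x y z w + S x y z w)"
    using R S by (intro linear_compose_add) meson+
  show "linear (\<lambda>y. R x y z w + S x y z w)"
    using R S by (intro linear_compose_add) meson+
  show "linear (\<lambda>z. R x y z w + S x y z w)"
    using R S by (intro linear_compose_add) meson+
  show "linear (\<lambda>w. R x y z w + S x y z w)"
    using R S by (intro linear_compose_add) meson+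
  have "R x y z w = R z w x y" "S x y z w = S z w x y"
    "R x y z w = - R y x z w" "S x y z w = - S y x z w"
    "R x y z w + R y z x w + R z x y w = 0" "S x y z w + S y z x w + S z x y w = 0"
    using R S by meson+
  then show "R x y z w + S x y z w = R z w x y + S z w x y"
    "R x y z w + S x y z w = - (R y x z w + S y x z w)"
    "R x y z w + S x y z w + (R y z x w + S y z x w) + (R z x y w + S z x y w) = 0"
    by linarith+
qed

lemma sym_bilinear_form_self_adjoint:
  assumes "sym_bilinear_form B" "linear f" "\<forall>x y. B (f x) y = B x (f y)"
  shows "sym_bilinear_form (\<lambda>x y. B (f x) y)"
  unfolding sym_bilinear_form_def bilinear_def
proof (intro conjI allI)
  fix x y
  show "linear (\<lambda>x. B (f x) y)"
    using assms(1,2) linear_compose[of f "\<lambda>x. B x y"]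
    by (simp add: sym_bilinear_form_def bilinear_def o_def)
  show "linear (\<lambda>y. B (f x) y)"
    using assms(1) by (simp add: sym_bilinear_form_def bilinear_def)
  show "B (f x) y = B (f y) x"
    using assms(3) sym_bilinear_form_commute[OF assms(1), of x "f y"] by simp
qed

definition nondegenerate :: "('a::real_vector \<Rightarrow> 'a \<Rightarrow> real) \<Rightarrow> bool" where
  "nondegenerate B \<longleftrightarrow> (\<forall>x. (\<forall>y. B x y = 0) \<longrightarrow> x = 0)"

lemma curv_op_eqI:
  assumes B: "bilinear B" "nondegenerate B" and u: "\<forall>w. B u w = R x y z w"
  shows "curv_op B R x y z = u"
  unfolding curv_op_def
proof (rule the_equality)
  fix u' assume "\<forall>w. B u' w = R x y z w"
  then have "\<forall>w. B (u' - u) w = 0"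
    using u B(1) by (simp add: bilinear_simps)
  then have "u' - u = 0"
    using B(2) unfolding nondegenerate_def by blast
  then show "u' = u"
    by simp
qed (rule u)

definition twisted_curv :: "('a \<Rightarrow> 'a \<Rightarrow> real) \<Rightarrow> ('a \<Rightarrow> 'a) \<Rightarrow> 'a \<Rightarrow> 'a \<Rightarrow> 'a \<Rightarrow> 'a \<Rightarrow> real" where
  "twisted_curv B f x y z w = curv_of_form B x y z w + curv_of_form (\<lambda>u v. B (f u) v) x y z w"

lemma alg_curv_tensor_twisted_curv:
  assumes "sym_bilinear_form B" "linear f" "\<forall>x y. B (f x) y = B x (f y)"
  shows "alg_curv_tensor (twisted_curv B f)"
  unfolding twisted_curv_def[abs_def]
  using alg_curv_tensor_add[OF alg_curv_tensor_curv_of_form alg_curv_tensor_curv_of_form]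
    assms sym_bilinear_form_self_adjoint by blast

lemma curv_op_twisted_curv:
  assumes "bilinear B" "nondegenerate B"
  shows "curv_op B (twisted_curv B f) x y z =
    B y z *\<^sub>R x - B x z *\<^sub>R y + B (f y) z *\<^sub>R f x - B (f x) z *\<^sub>R f y"
  using assms
  by (intro curv_op_eqI) (simp_all add: twisted_curv_def curv_of_form_def bilinear_simps algebra_simps)

lemma euclidean_dual_vector:
  fixes x :: "'a::euclidean_space"
  assumes "x \<notin> span W"
  obtains y where "inner x y = 1" "\<forall>w\<in>W. inner w y = 0"
proof -
  obtain s t where s: "s \<in> span W" and t: "\<And>w. w \<in> span W \<Longrightarrow> orthogonal t w" and x: "x = s + t"
    using orthogonal_subspace_decomp_exists[of W x] by blast
  have "t \<noteq> 0"
    using assms s x by auto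
  have "inner x t = inner t t"
    using t[OF s] by (simp add: x inner_add_left orthogonal_def inner_commute[of t s])
  moreover have "\<forall>w\<in>W. inner w t = 0"
    using t span_base by (metis orthogonal_def inner_commute)
  ultimately show ?thesis
    using that[of "(1 / inner t t) *\<^sub>R t"] \<open>t \<noteq> 0\<close> by simp
qed

text \<open>The map \<open>D\<close> in the proof satisfies \<open>B u z = inner u (D z)\<close>; nondegeneracy makes it injective,
  hence onto.\<close>

lemma nondegenerate_represents_inner:
  fixes B :: "'a::euclidean_space \<Rightarrow> 'a \<Rightarrow> real"
  assumes B: "sym_bilinear_form B" "nondegenerate B"
  obtains z where "\<forall>u. B u z = inner u y"
proof -
  have bl: "bilinear B"
    using B(1) by (rule sym_bilinear_form_bilinear)
  define D where "D z = (\<Sum>b\<in>Basis. B b z *\<^sub>R b)" for z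
  have BD: "B u z = inner u (D z)" for u z
  proof -
    have "B u z = B (\<Sum>b\<in>Basis. inner u b *\<^sub>R b) z"
      by (simp add: euclidean_representation)
    then show ?thesis
      by (simp add: D_def bl bilinear_simps inner_sum_right mult.commute)
  qed
  have D: "linear D"
    by (rule linearI) (simp_all add: D_def bl bilinear_simps scaleR_add_left sum.distrib scaleR_sum_right)
  moreover have "inj D"
  proof (rule injI)
    fix z z' assume "D z = D z'"
    then have "\<forall>u. B (z - z') u = 0"
      using BD sym_bilinear_form_commute[OF B(1)] by (simp add: linear_diff[OF D])
    then have "z - z' = 0"
      using B(2) unfolding nondegenerate_def by blast
    then show "z = z'"
      by simp
  qed
  ultimately obtain z where "D z = y"
    using linear_injective_imp_surjective by (metis surjD)
  then show ?thesis
    using that BD by blast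
qed

lemma nondegenerate_dual_vector:
  fixes B :: "'a::euclidean_space \<Rightarrow> 'a \<Rightarrow> real"
  assumes "sym_bilinear_form B" "nondegenerate B" "x \<notin> span W"
  obtains z where "B x z = 1" "\<forall>w\<in>W. B w z = 0"
proof -
  obtain y where "inner x y = 1" "\<forall>w\<in>W. inner w y = 0"
    using euclidean_dual_vector[OF assms(3)] .
  moreover obtain z where "\<forall>u. B u z = inner u y"
    using nondegenerate_represents_inner[OF assms(1,2)] .
  ultimately show ?thesis
    using that[of z] by simp
qed

section \<open>Ranks of the curvature operators\<close>

lemma notin_span_if_card_lt_dim:
  fixes S :: "'a::euclidean_space set"
  assumes "finite S" "card S < dim (insert x S)"
  shows "x \<notin> span S"
  using assms dim_le_card'[of S] dim_insert[of x S] by auto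

lemma notin_span_of_dim_eq_4:
  fixes a :: "'a::euclidean_space"
  assumes "dim {a, b, c, d} = 4"
  shows "a \<notin> span {b, c, d}"
  using notin_span_if_card_lt_dim[of "{b, c, d}" a] assms by (simp add: card_insert_if)

lemma independent_pair_of_dim_eq_2:
  fixes e1 :: "'a::euclidean_space"
  assumes "dim {e1, e2} = 2" "s *\<^sub>R e1 + t *\<^sub>R e2 = 0"
  shows "s = 0" "t = 0"
proof -
  have "e1 \<notin> span {e2}" "e2 \<notin> span {e1}"
    using notin_span_if_card_lt_dim[of "{e2}" e1] notin_span_if_card_lt_dim[of "{e1}" e2] assms(1)
    by (simp_all add: insert_commute)
  show "s = 0"
  proof (rule ccontr)
    assume "s \<noteq> 0"
    have "s *\<^sub>R e1 = - (t *\<^sub>R e2)"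
      using assms(2) by (simp add: eq_neg_iff_add_eq_0)
    then have "(1 / s) *\<^sub>R (s *\<^sub>R e1) \<in> span {e2}"
      by (simp add: span_neg span_scale span_base)
    then show False
      using \<open>s \<noteq> 0\<close> \<open>e1 \<notin> span {e2}\<close> by simp
  qed
  then show "t = 0"
    using assms(2) \<open>e2 \<notin> span {e1}\<close> span_zero by force
qed

lemma op_rank_scaleR:
  fixes g :: "'a::euclidean_space \<Rightarrow> 'a"
  assumes "c \<noteq> 0"
  shows "op_rank (\<lambda>z. c *\<^sub>R g z) = op_rank g"
proof -
  have "range (\<lambda>z. c *\<^sub>R g z) = (\<lambda>x. c *\<^sub>R x) ` range g"
    by auto
  moreover have "inj_on (\<lambda>x. c *\<^sub>R x) (span (range g))"
    using assms by (auto intro: inj_onI)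
  ultimately show ?thesis
    unfolding op_rank_def using dim_image_eq[OF linear_scaleR] by metis
qed

lemma plane_gram_det_nonzero:
  assumes B: "sym_bilinear_form B" and plane: "plane_of_type B r s e1 e2"
  shows "B e1 e1 * B e2 e2 - (B e1 e2)\<^sup>2 \<noteq> 0"
proof
  assume det: "B e1 e1 * B e2 e2 - (B e1 e2)\<^sup>2 = 0"
  have bl: "bilinear B"
    using B by (rule sym_bilinear_form_bilinear)
  have dim2: "dim {e1, e2} = 2"
    using plane by (simp add: plane_of_type_def)
  have radical: "w = 0" if "w \<in> span {e1, e2}" "B w e1 = 0" "B w e2 = 0" for w
  proof -
    have "\<forall>y\<in>span {e1, e2}. B w y = 0"
      using bilinear_orthogonal_span[OF bl, of "{e1, e2}" w] that(2,3) by auto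
    then show ?thesis
      using plane that(1) by (simp add: plane_of_type_def signature_on_def)
  qed
  show False
  proof (cases "B e1 e1 = 0")
    case True
    then have "B e1 e2 = 0"
      using det by simp
    then have "1 *\<^sub>R e1 + 0 *\<^sub>R e2 = 0"
      using radical[of e1] True by (simp add: span_base)
    then show False
      using independent_pair_of_dim_eq_2[OF dim2] by fastforce
  next
    case False
    define w where "w = B e1 e2 *\<^sub>R e1 + (- B e1 e1) *\<^sub>R e2"
    have "w = 0"
    proof (rule radical)
      show "w \<in> span {e1, e2}"
        unfolding w_def by (intro span_add span_scale span_base) auto
      show "B w e1 = 0"
        using sym_bilinear_form_commute[OF B, of e2 e1] by (simp add: w_def bl bilinear_simps)
      show "B w e2 = 0"
        using det by (simp add: w_def bl bilinear_simps power2_eq_square)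
    qed
    then show False
      using independent_pair_of_dim_eq_2(2)[OF dim2 \<open>w = 0\<close>[unfolded w_def]] False by simp
  qed
qed

lemma op_rank_plane_op:
  assumes "sym_bilinear_form B" "plane_of_type B r s e1 e2"
  shows "op_rank (plane_op B R e1 e2) = op_rank (curv_op B R e1 e2)"
proof -
  have "\<bar>B e1 e1 * B e2 e2 - (B e1 e2)\<^sup>2\<bar> powr (-1/2) \<noteq> 0"
    using plane_gram_det_nonzero[OF assms] by simp
  then show ?thesis
    unfolding plane_op_def[abs_def] by (rule op_rank_scaleR)
qed

lemma range_curv_op_twisted_curv:
  assumes "bilinear B" "nondegenerate B"
  shows "range (curv_op B (twisted_curv B f) x y) \<subseteq> span {x, y, f x, f y}"
  unfolding curv_op_twisted_curv[OF assms]
  by (intro image_subsetI span_add span_diff span_scale span_base) auto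

lemma op_rank_twisted_curv_le:
  assumes "bilinear B" "nondegenerate B"
  shows "op_rank (curv_op B (twisted_curv B f) x y) \<le> dim {x, y, f x, f y}"
  unfolding op_rank_def using dim_mono[OF range_curv_op_twisted_curv[OF assms]] .

lemma op_rank_twisted_curv_eq_4:
  fixes B :: "'a::euclidean_space \<Rightarrow> 'a \<Rightarrow> real"
  assumes B: "sym_bilinear_form B" "nondegenerate B" and dim4: "dim {x, y, f x, f y} = 4"
  shows "op_rank (curv_op B (twisted_curv B f) x y) = 4"
proof -
  have bl: "bilinear B"
    using B(1) by (rule sym_bilinear_form_bilinear)
  let ?g = "curv_op B (twisted_curv B f) x y"
  have g: "?g z = B y z *\<^sub>R x - B x z *\<^sub>R y + B (f y) z *\<^sub>R f x - B (f x) z *\<^sub>R f y" for z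
    using curv_op_twisted_curv[OF bl B(2)] .
  have "dim {y, x, f x, f y} = 4" "dim {f y, x, y, f x} = 4" "dim {f x, x, y, f y} = 4"
    using dim4 by (simp_all add: insert_commute)
  then have "y \<notin> span {x, f x, f y}" "x \<notin> span {y, f x, f y}"
    "f y \<notin> span {x, y, f x}" "f x \<notin> span {x, y, f y}"
    using dim4 by (simp_all add: notin_span_of_dim_eq_4)
  then obtain z1 z2 z3 z4 where
    "B y z1 = 1" "\<forall>w\<in>{x, f x, f y}. B w z1 = 0"
    "B x z2 = 1" "\<forall>w\<in>{y, f x, f y}. B w z2 = 0"
    "B (f y) z3 = 1" "\<forall>w\<in>{x, y, f x}. B w z3 = 0"
    "B (f x) z4 = 1" "\<forall>w\<in>{x, y, f y}. B w z4 = 0"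
    using nondegenerate_dual_vector[OF B] by metis
  then have "?g z1 = x" "?g (- z2) = y" "?g z3 = f x" "?g (- z4) = f y"
    by (simp_all add: g bl bilinear_simps)
  then have "{x, y, f x, f y} \<subseteq> range ?g"
    by (metis rangeI empty_subsetI insert_subset)
  then have "4 \<le> op_rank ?g"
    unfolding op_rank_def using dim4 dim_subset by metis
  then show ?thesis
    using op_rank_twisted_curv_le[OF bl B(2), of f x y] dim4 by simp
qed

lemma dim_Un_image_sign_reversing:
  fixes C :: "'a::euclidean_space \<Rightarrow> 'a \<Rightarrow> real"
  assumes C: "bilinear C" and f: "linear f"
    and pos: "\<forall>w\<in>span S. w \<noteq> 0 \<longrightarrow> C w w > 0"
    and neg: "\<forall>w\<in>span S. w \<noteq> 0 \<longrightarrow> C (f w) (f w) < 0"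
  shows "dim (S \<union> f ` S) = 2 * dim S"
proof -
  have f_nonzero: "f w \<noteq> 0" if "w \<in> span S" "w \<noteq> 0" for w
    using neg that C by (auto simp: bilinear_simps)
  have "inj_on f (span S)"
  proof (rule inj_onI)
    fix x y assume "x \<in> span S" "y \<in> span S" "f x = f y"
    then show "x = y"
      using f_nonzero[of "x - y"] by (auto simp: span_diff linear_diff[OF f])
  qed
  then have dim_image: "dim (f ` S) = dim S"
    using dim_image_eq[OF f] by blast
  have "span S \<inter> span (f ` S) = {0}"
  proof (intro subset_antisym subsetI)
    fix w assume w: "w \<in> span S \<inter> span (f ` S)"
    then obtain s where s: "s \<in> span S" "w = f s"
      using span_linear_image[OF f] by auto
    show "w \<in> {0}"
    proof (rule ccontr)
      assume "w \<notin> {0}"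
      then have "s \<noteq> 0"
        using s linear_0[OF f] by auto
      then show False
        using pos neg s w \<open>w \<notin> {0}\<close> by fastforce
    qed
  qed (simp add: span_zero)
  then have "dim (span S \<inter> span (f ` S)) = 0"
    by simp
  moreover have "dim (S \<union> f ` S) = dim {x + y |x y. x \<in> span S \<and> y \<in> span (f ` S)}"
    by (simp only: span_Un[symmetric] dim_span)
  ultimately have "dim (S \<union> f ` S) = dim S + dim (f ` S)"
    using dim_sums_Int[OF subspace_span subspace_span, of S "f ` S"] by (simp only: dim_span)
  then show ?thesis
    using dim_image by simp
qed

lemma dim_orthogonal_4:
  fixes C :: "'a::euclidean_space \<Rightarrow> 'a \<Rightarrow> real"
  assumes "bilinear C"
    and "C x y = 0" "C x u = 0" "C x w = 0" "C y u = 0" "C y w = 0" "C u w = 0"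
    and "C x x \<noteq> 0" "C y y \<noteq> 0" "C u u \<noteq> 0" "C w w \<noteq> 0"
  shows "dim {x, y, u, w} = 4"
  using dim_insert_orthogonal[OF assms(1), of "{}" w] dim_insert_orthogonal[OF assms(1), of "{w}" u]
    dim_insert_orthogonal[OF assms(1), of "{u, w}" y] dim_insert_orthogonal[OF assms(1), of "{y, u, w}" x]
    assms by simp

locale swap_curvature =
  fixes B :: "'a::euclidean_space \<Rightarrow> 'a \<Rightarrow> real" and p q :: nat and v a :: "nat \<Rightarrow> 'a"
  assumes sig: "inner_product_sig B p q" and q_le_p: "q \<le> p"
    and v: "orthonormal_family B q v" and a: "orthonormal_family (- B) p a"
    and va: "\<forall>i<q. \<forall>j<p. B (v i) (a j) = 0"
    and max_v: "\<forall>u. (\<forall>i<q. B u (v i) = 0) \<longrightarrow> B u u \<le> 0"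
    and max_a: "\<forall>u. (\<forall>i<p. B u (a i) = 0) \<longrightarrow> 0 \<le> B u u"
begin

abbreviation f where "f \<equiv> swap_op B v a q"

abbreviation R where "R \<equiv> twisted_curv B f"

lemma B_sym: "sym_bilinear_form B"
  using sig by (simp add: inner_product_sig_def)

lemma B_bilinear: "bilinear B"
  using B_sym by (rule sym_bilinear_form_bilinear)

lemma B_nondegenerate: "nondegenerate B"
  using sig by (simp add: inner_product_sig_def signature_on_def nondegenerate_def)

lemma B_frame:
  "i < q \<Longrightarrow> j < q \<Longrightarrow> B (v i) (v j) = (if i = j then 1 else 0)"
  "i < p \<Longrightarrow> j < p \<Longrightarrow> B (a i) (a j) = (if i = j then -1 else 0)"
  "i < q \<Longrightarrow> j < p \<Longrightarrow> B (v i) (a j) = 0"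
  "i < q \<Longrightarrow> j < p \<Longrightarrow> B (a j) (v i) = 0"
proof -
  show "i < q \<Longrightarrow> j < q \<Longrightarrow> B (v i) (v j) = (if i = j then 1 else 0)"
    using v by (simp add: orthonormal_family_def)
  show "i < p \<Longrightarrow> j < p \<Longrightarrow> B (a i) (a j) = (if i = j then -1 else 0)"
  proof -
    assume "i < p" "j < p"
    then have "(- B) (a i) (a j) = (if i = j then 1 else 0)"
      using a unfolding orthonormal_family_def by blast
    then show ?thesis
      by (simp split: if_splits)
  qed
  show "i < q \<Longrightarrow> j < p \<Longrightarrow> B (v i) (a j) = 0"
    using va by simp
  then show "i < q \<Longrightarrow> j < p \<Longrightarrow> B (a j) (v i) = 0"
    using sym_bilinear_form_commute[OF B_sym] by metis
qed

lemma split_frame: "split_frame B q v a"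
  using v orthonormal_family_mono[OF a q_le_p] va q_le_p by (simp add: split_frame_def)

lemma f_v: "j < q \<Longrightarrow> f (v j) = a j"
  using swap_op_first[OF split_frame] .

lemma f_a: "j < q \<Longrightarrow> f (a j) = - v j"
  using swap_op_second[OF B_sym split_frame] .

lemma f_a_beyond: "q \<le> j \<Longrightarrow> j < p \<Longrightarrow> f (a j) = 0"
  using B_frame(2,4) by (intro swap_op_orthogonal) auto

lemma alg_curv_tensor_R: "alg_curv_tensor R"
  using alg_curv_tensor_twisted_curv[OF B_sym linear_swap_op[OF B_bilinear]]
    swap_op_self_adjoint[OF B_sym] by blast

lemma op_rank_le:
  "plane_of_type B r s e1 e2 \<Longrightarrow> op_rank (plane_op B R e1 e2) \<le> dim {e1, e2, f e1, f e2}"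
  using op_rank_plane_op[OF B_sym] op_rank_twisted_curv_le[OF B_bilinear B_nondegenerate] by simp

lemma op_rank_eq_4:
  "plane_of_type B r s e1 e2 \<Longrightarrow> dim {e1, e2, f e1, f e2} = 4 \<Longrightarrow> op_rank (plane_op B R e1 e2) = 4"
  using op_rank_plane_op[OF B_sym] op_rank_twisted_curv_eq_4[OF B_sym B_nondegenerate] by simp

lemma op_rank_eq_4_sign_reversing:
  assumes plane: "plane_of_type B r s e1 e2" and C: "sym_bilinear_form C"
    and pos: "pos_def_subspace C (span {e1, e2})" and rev: "\<forall>w. C (f w) (f w) \<le> - C w w"
  shows "op_rank (plane_op B R e1 e2) = 4"
proof -
  have "\<forall>w\<in>span {e1, e2}. w \<noteq> 0 \<longrightarrow> C w w > 0"
    using pos by (simp add: pos_def_subspace_def)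
  moreover have "\<forall>w\<in>span {e1, e2}. w \<noteq> 0 \<longrightarrow> C (f w) (f w) < 0"
    using calculation rev by (meson neg_less_0_iff_less order_le_less_trans)
  ultimately have "dim ({e1, e2} \<union> f ` {e1, e2}) = 2 * dim {e1, e2}"
    using dim_Un_image_sign_reversing[OF sym_bilinear_form_bilinear[OF C] linear_swap_op[OF B_bilinear]]
    by blast
  moreover have "{e1, e2} \<union> f ` {e1, e2} = {e1, e2, f e1, f e2}"
    by auto
  ultimately show ?thesis
    using op_rank_eq_4[OF plane] plane by (simp add: plane_of_type_def)
qed

lemma spacelike_rank_4: "spacelike_rank B R 4"
  unfolding spacelike_rank_def rank_on_planes_def
  using op_rank_eq_4_sign_reversing[OF _ B_sym plane_of_type_spacelike_pos_def]
    swap_op_square_le[OF B_sym split_frame max_v] by blast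

lemma timelike_rank_4:
  assumes "p = q"
  shows "timelike_rank B R 4"
proof -
  have "\<forall>u. (\<forall>i<q. (- B) u (a i) = 0) \<longrightarrow> (- B) u u \<le> 0"
    using max_a assms by simp
  then have rev: "\<forall>w. (- B) (f w) (f w) \<le> - (- B) w w"
    using swap_op_square_le[OF sym_bilinear_form_uminus[OF B_sym] split_frame_uminus[OF B_sym split_frame]]
    by (simp add: swap_op_uminus B_bilinear bilinear_simps)
  then show ?thesis
    unfolding timelike_rank_def rank_on_planes_def
  proof (intro allI impI)
    fix e1 e2 assume plane: "plane_of_type B 2 0 e1 e2"
    then have "pos_def_subspace (- B) (span {e1, e2})"
      by (simp add: plane_of_type_timelike_iff plane_of_type_spacelike_pos_def)
    then show "op_rank (plane_op B R e1 e2) = 4"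
      using op_rank_eq_4_sign_reversing[OF plane sym_bilinear_form_uminus[OF B_sym]] rev by blast
  qed
qed

lemma mixed_plane_low_rank:
  assumes "0 < q"
  shows "plane_of_type B 1 1 (a 0) (v 0)" "op_rank (plane_op B R (a 0) (v 0)) \<le> 2"
proof -
  show plane: "plane_of_type B 1 1 (a 0) (v 0)"
    using assms q_le_p by (intro orthogonal_pair_mixed[OF B_sym]) (simp_all add: B_frame)
  have "{a 0, v 0, f (a 0), f (v 0)} \<subseteq> span {a 0, v 0}"
    using assms by (simp add: f_a f_v span_base span_neg)
  then have "dim {a 0, v 0, f (a 0), f (v 0)} \<le> dim {a 0, v 0}"
    by (rule dim_mono)
  also have "\<dots> \<le> card {a 0, v 0}"
    by (simp add: dim_le_card')
  also have "\<dots> \<le> 2"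
    by (simp add: card_insert_if)
  finally show "op_rank (plane_op B R (a 0) (v 0)) \<le> 2"
    using op_rank_le[OF plane] by linarith
qed

lemma not_mixed_rank_4:
  assumes "0 < q"
  shows "\<not> mixed_rank B R 4"
proof
  assume "mixed_rank B R 4"
  then have "op_rank (plane_op B R (a 0) (v 0)) = 4"
    using mixed_plane_low_rank(1)[OF assms] by (simp add: mixed_rank_def rank_on_planes_def)
  then show False
    using mixed_plane_low_rank(2)[OF assms] by simp
qed

lemma not_const_mixed_rank:
  assumes "2 \<le> q"
  shows "\<not> const_mixed_rank B R"
proof
  assume "const_mixed_rank B R"
  then obtain r where r: "mixed_rank B R r"
    by (auto simp: const_mixed_rank_def)
  have plane: "plane_of_type B 1 1 (a 0) (v 1)"
    using assms q_le_p by (intro orthogonal_pair_mixed[OF B_sym]) (simp_all add: B_frame)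
  have "dim {a 0, v 1, - v 0, a 1} = 4"
    using assms q_le_p
    by (intro dim_orthogonal_4[OF B_bilinear]) (simp_all add: B_frame B_bilinear bilinear_simps)
  then have "op_rank (plane_op B R (a 0) (v 1)) = 4"
    using op_rank_eq_4[OF plane] assms by (simp add: f_a f_v)
  then have "r = 4"
    using r plane by (simp add: mixed_rank_def rank_on_planes_def)
  then show False
    using r not_mixed_rank_4 assms by simp
qed

lemma not_const_timelike_rank:
  assumes "2 \<le> q" "q < p"
  shows "\<not> const_timelike_rank B R"
proof
  assume "const_timelike_rank B R"
  then obtain r where r: "timelike_rank B R r"
    by (auto simp: const_timelike_rank_def)
  have planes: "plane_of_type B 2 0 (a 0) (a 1)" "plane_of_type B 2 0 (a 0) (a q)"
    using assms unfolding plane_of_type_timelike_iff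
    by (intro orthogonal_pair_spacelike[OF sym_bilinear_form_uminus[OF B_sym]]; simp add: B_frame)+
  have "dim {a 0, a 1, - v 0, - v 1} = 4"
    using assms by (intro dim_orthogonal_4[OF B_bilinear]) (simp_all add: B_frame B_bilinear bilinear_simps)
  then have "op_rank (plane_op B R (a 0) (a 1)) = 4"
    using op_rank_eq_4[OF planes(1)] assms by (simp add: f_a)
  then have "r = 4"
    using r planes(1) by (simp add: timelike_rank_def rank_on_planes_def)
  have "{a 0, a q, f (a 0), f (a q)} \<subseteq> span {a 0, a q, v 0}"
    using assms by (simp add: f_a f_a_beyond span_base span_neg span_zero)
  then have "dim {a 0, a q, f (a 0), f (a q)} \<le> dim {a 0, a q, v 0}"
    by (rule dim_mono)
  also have "\<dots> \<le> card {a 0, a q, v 0}"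
    by (simp add: dim_le_card')
  also have "\<dots> \<le> 3"
    by (simp add: card_insert_if)
  finally have "op_rank (plane_op B R (a 0) (a q)) \<le> 3"
    using op_rank_le[OF planes(2)] by linarith
  then show False
    using r planes(2) \<open>r = 4\<close> by (simp add: timelike_rank_def rank_on_planes_def)
qed

end

theorem lemma2p3:
  fixes B :: "'a::euclidean_space \<Rightarrow> 'a \<Rightarrow> real" and p q :: nat
  assumes "inner_product_sig B p q" and "p \<ge> q" and "q \<ge> 2"
  shows "(p = q \<longrightarrow> (\<exists>R. alg_curv_tensor R \<and> spacelike_rank B R 4 \<and> timelike_rank B R 4
                        \<and> \<not> const_mixed_rank B R))
       \<and> (p > q \<longrightarrow> (\<exists>R. alg_curv_tensor R \<and> spacelike_rank B R 4
                        \<and> \<not> const_timelike_rank B R \<and> \<not> mixed_rank B R 4))"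
proof -
  obtain v a where frame: "orthonormal_family B q v" "orthonormal_family (- B) p a"
    "\<forall>i<q. \<forall>j<p. B (v i) (a j) = 0"
    "\<forall>u. (\<forall>i<q. B u (v i) = 0) \<longrightarrow> B u u \<le> 0"
    "\<forall>u. (\<forall>i<p. B u (a i) = 0) \<longrightarrow> 0 \<le> B u u"
    using inner_product_sig_frame[OF assms(1)] by blast
  interpret swap_curvature B p q v a
    using swap_curvature.intro[OF assms(1,2) frame] .
  show ?thesis
    using alg_curv_tensor_R spacelike_rank_4 timelike_rank_4 not_const_mixed_rank
      not_const_timelike_rank not_mixed_rank_4 assms(3)
    by (intro conjI impI exI[of _ R]) simp_all
qed

end
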